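(* Let $N \geq 2$ and, for each generation $t \in \{1,2,\dots\}$, let $\nu_t^{(1:N)} = (\nu_t^{(1)},\dots,\nu_t^{(N)})$ be non-negative integers with $\sum_{i=1}^N \nu_t^{(i)} = N$. Define $$c_N(t) := \frac{1}{(N)_2}\sum_{i=1}^N (\nu_t^{(i)})_2, \qquad D_N(t) := \frac{1}{N(N)_2}\sum_{i=1}^N (\nu_t^{(i)})_2\Big\{\nu_t^{(i)} + \frac1N\sum_{j\neq i}(\nu_t^{(j)})^2\Big\},$$ and $\tau_N(u) := \inf\{ s \in \{0,1,2,\dots\} : \sum_{r=1}^s c_N(r) \geq u\}$ for $u \geq 0$ (an empty sum being $0$, so $\tau_N(0)=0$). Then for all $t \in \{1,2,\dots\}$ and all real $t' > s' \geq 0$ with $\tau_N(t') < \infty$: (a) $0 \leq D_N(t) \leq c_N(t) \leq 1$; (b) $t' - (s'+1)\mathbb{1}_{(0,\infty)}(s') \leq \sum_{r=\tau_N(s')+1}^{\tau_N(t')} c_N(r) \leq t'+1$; (c) $\tau_N(t') \geq t'$.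
   Context: $(x)_k := x(x-1)\cdots(x-k+1)$ denotes the falling factorial. $\nu_t^{(i)}$ is interpreted as the number of offspring in generation $t-1$ of individual $i$ in generation $t$ (generations labelled backwards in time), but the claim only uses that the $\nu_t^{(i)}$ are non-negative integers summing to $N$. *)

theory Defs
  imports Complex_Main
begin

definition ff2 :: "nat \<Rightarrow> real" where
  "ff2 x = real x * (real x - 1)"

text \<open>nu t i = offspring count of individual i (1..N) in generation t (t \<ge> 1).\<close>
definition cN :: "nat \<Rightarrow> (nat \<Rightarrow> nat \<Rightarrow> nat) \<Rightarrow> nat \<Rightarrow> real" where
  "cN N nu t = (\<Sum>i=1..N. ff2 (nu t i)) / ff2 N"

definition DN :: "nat \<Rightarrow> (nat \<Rightarrow> nat \<Rightarrow> nat) \<Rightarrow> nat \<Rightarrow> real" where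
  "DN N nu t = (\<Sum>i=1..N. ff2 (nu t i) *
      (real (nu t i) + (1 / real N) * (\<Sum>j\<in>{1..N} - {i}. (real (nu t j))\<^sup>2)))
      / (real N * ff2 N)"

text \<open>tau_N(u) = inf{s \<in> nat. sum_{r=1}^s c_N(r) \<ge> u}; only meaningful (finite) when
  the set is nonempty, which is assumed where it is used.\<close>
definition tauN :: "nat \<Rightarrow> (nat \<Rightarrow> nat \<Rightarrow> nat) \<Rightarrow> real \<Rightarrow> nat" where
  "tauN N nu u = (LEAST s. (\<Sum>r=1..s. cN N nu r) \<ge> u)"

definition tau_finite :: "nat \<Rightarrow> (nat \<Rightarrow> nat \<Rightarrow> nat) \<Rightarrow> real \<Rightarrow> bool" where
  "tau_finite N nu u \<longleftrightarrow> (\<exists>s. (\<Sum>r=1..s. cN N nu r) \<ge> u)"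

end

theory Submission
  imports Defs
begin

text \<open>Part (a) is pointwise in \<open>i\<close>: \<open>\<nu>\<^sub>i \<le> N\<close> gives \<open>(\<nu>\<^sub>i)\<^sub>2 \<le> \<nu>\<^sub>i (N - 1)\<close>, and since the
  other offspring numbers sum to \<open>N - \<nu>\<^sub>i\<close>, their squares sum to at most \<open>(N - \<nu>\<^sub>i)\<^sup>2\<close>,
  which bounds the bracket in \<open>D\<^sub>N\<close> by \<open>N\<close>. Parts (b) and (c) hold for the first passage
  time \<open>\<tau>\<close> of the partial sums of any sequence with values in \<open>[0, 1]\<close>: at time \<open>\<tau>(u)\<close>
  the partial sum has reached \<open>u\<close>, but it was below \<open>u\<close> one step earlier, so it overshoots
  by less than one; and a partial sum never exceeds its number of terms.\<close>

lemma sum_squares_le_square_sum: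
  fixes x :: "'a \<Rightarrow> 'b :: linordered_idom"
  assumes "finite A" and "\<And>j. j \<in> A \<Longrightarrow> 0 \<le> x j"
  shows "(\<Sum>j\<in>A. (x j)\<^sup>2) \<le> (\<Sum>j\<in>A. x j)\<^sup>2"
proof -
  have "(\<Sum>j\<in>A. (x j)\<^sup>2) \<le> (\<Sum>j\<in>A. x j * (\<Sum>k\<in>A. x k))"
  proof (rule sum_mono)
    fix j assume "j \<in> A"
    then have "x j \<le> (\<Sum>k\<in>A. x k)"
      using assms by (intro member_le_sum) auto
    then show "(x j)\<^sup>2 \<le> x j * (\<Sum>k\<in>A. x k)"
      using assms \<open>j \<in> A\<close> by (simp add: power2_eq_square mult_left_mono)
  qed
  also have "\<dots> = (\<Sum>j\<in>A. x j)\<^sup>2"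
    by (simp add: power2_eq_square sum_distrib_right)
  finally show ?thesis .
qed

lemma ff2_nonneg: "0 \<le> ff2 x"
  unfolding ff2_def by (cases x) auto

lemma offspring_le_total:
  fixes x :: "nat \<Rightarrow> nat"
  assumes "(\<Sum>i=1..N. x i) = N" and "i \<in> {1..N}"
  shows "x i \<le> N"
  using member_le_sum[of i "{1..N}" x] assms by auto

lemma cN_nonneg: "0 \<le> cN N nu t"
  unfolding cN_def by (intro divide_nonneg_nonneg sum_nonneg ff2_nonneg)

lemma cN_le_1:
  assumes sum_nu: "(\<Sum>i=1..N. nu t i) = N"
  shows "cN N nu t \<le> 1"
proof -
  have "(\<Sum>i=1..N. ff2 (nu t i)) \<le> (\<Sum>i=1..N. real (nu t i) * (real N - 1))"
  proof (rule sum_mono)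
    fix i assume "i \<in> {1..N}"
    then have "nu t i \<le> N"
      using offspring_le_total[of "nu t"] sum_nu by blast
    then show "ff2 (nu t i) \<le> real (nu t i) * (real N - 1)"
      unfolding ff2_def by (intro mult_left_mono) auto
  qed
  also have "\<dots> = ff2 N"
    using sum_nu by (simp add: ff2_def flip: sum_distrib_right of_nat_sum)
  finally show ?thesis
    unfolding cN_def using ff2_nonneg[of N] by (auto simp: divide_le_eq_1)
qed

lemma DN_nonneg: "0 \<le> DN N nu t"
  unfolding DN_def
  by (intro divide_nonneg_nonneg sum_nonneg mult_nonneg_nonneg ff2_nonneg add_nonneg_nonneg) auto

lemma DN_bracket_le:
  fixes x :: "nat \<Rightarrow> nat"
  assumes sum_x: "(\<Sum>i=1..N. x i) = N" and i: "i \<in> {1..N}"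
  shows "real (x i) + (1 / real N) * (\<Sum>j\<in>{1..N} - {i}. (real (x j))\<^sup>2) \<le> real N"
proof -
  have "(\<Sum>j\<in>{1..N}. real (x j)) = real N"
    using sum_x by (simp flip: of_nat_sum)
  then have rest: "(\<Sum>j\<in>{1..N} - {i}. real (x j)) = real N - real (x i)"
    using i by (simp add: sum_diff1)
  have "(\<Sum>j\<in>{1..N} - {i}. (real (x j))\<^sup>2) \<le> (real N - real (x i))\<^sup>2"
    using sum_squares_le_square_sum[of "{1..N} - {i}" "\<lambda>j. real (x j)"] rest by simp
  then have "real (x i) + (1 / real N) * (\<Sum>j\<in>{1..N} - {i}. (real (x j))\<^sup>2)
      \<le> real (x i) + (real N - real (x i))\<^sup>2 / real N"
    by (simp add: divide_right_mono)
  also have "\<dots> = real N - real (x i) * (real N - real (x i)) / real N"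
    using i by (simp add: field_simps power2_eq_square)
  also have "\<dots> \<le> real N"
    using offspring_le_total[OF sum_x i] by simp
  finally show ?thesis .
qed

lemma DN_le_cN:
  assumes sum_nu: "(\<Sum>i=1..N. nu t i) = N"
  shows "DN N nu t \<le> cN N nu t"
proof -
  have "(\<Sum>i=1..N. ff2 (nu t i) *
      (real (nu t i) + (1 / real N) * (\<Sum>j\<in>{1..N} - {i}. (real (nu t j))\<^sup>2)))
      \<le> (\<Sum>i=1..N. ff2 (nu t i)) * real N"
    unfolding sum_distrib_right
    by (intro sum_mono mult_left_mono[OF DN_bracket_le[of "nu t", OF sum_nu] ff2_nonneg])
  then have "DN N nu t \<le> real N * (\<Sum>i=1..N. ff2 (nu t i)) / (real N * ff2 N)"
    unfolding DN_def by (intro divide_right_mono) (simp_all add: ff2_nonneg mult.commute)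
  also have "\<dots> \<le> cN N nu t"
    unfolding cN_def mult_divide_mult_cancel_left_if by (simp add: cN_nonneg[unfolded cN_def])
  finally show ?thesis .
qed

definition first_passage :: "(nat \<Rightarrow> real) \<Rightarrow> real \<Rightarrow> nat" where
  "first_passage f u = (LEAST s. u \<le> (\<Sum>r=1..s. f r))"

lemma tauN_eq_first_passage: "tauN N nu = first_passage (cN N nu)"
  by (simp add: fun_eq_iff tauN_def first_passage_def)

lemma first_passage_reached:
  assumes "\<exists>s. u \<le> (\<Sum>r=1..s. f r)"
  shows "u \<le> (\<Sum>r=1..first_passage f u. f r)"
  unfolding first_passage_def using LeastI_ex[OF assms] .

lemma first_passage_0: "first_passage f 0 = 0"
  unfolding first_passage_def by (intro Least_eq_0) simp

lemma first_passage_mono: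
  assumes "u \<le> v" and "\<exists>s. v \<le> (\<Sum>r=1..s. f r)"
  shows "first_passage f u \<le> first_passage f v"
  using first_passage_reached[OF assms(2)] assms(1)
  unfolding first_passage_def[of f u] by (intro Least_le) simp

lemma first_passage_overshoot:
  assumes le_1: "\<And>r. 1 \<le> r \<Longrightarrow> f r \<le> 1" and "0 < u"
  shows "(\<Sum>r=1..first_passage f u. f r) < u + 1"
proof (cases "first_passage f u")
  case 0
  then show ?thesis using \<open>0 < u\<close> by simp
next
  case (Suc k)
  then have "\<not> u \<le> (\<Sum>r=1..k. f r)"
    unfolding first_passage_def by (metis lessI not_less_Least)
  then show ?thesis
    using Suc le_1[of "Suc k"] by simp
qed

lemma partial_sum_le_length:
  assumes "\<And>r. 1 \<le> r \<Longrightarrow> f r \<le> 1"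
  shows "(\<Sum>r=1..k. f r) \<le> real k"
  using sum_mono[of "{1..k}" f "\<lambda>_. 1"] assms by simp

lemma first_passage_ge:
  assumes "\<And>r. 1 \<le> r \<Longrightarrow> f r \<le> 1" and "\<exists>s. u \<le> (\<Sum>r=1..s. f r)"
  shows "u \<le> real (first_passage f u)"
  using first_passage_reached[OF assms(2)] partial_sum_le_length[OF assms(1)] by (rule order_trans)

lemma sum_split_at_first_passage:
  assumes "u \<le> v" and "\<exists>s. v \<le> (\<Sum>r=1..s. f r)"
  shows "(\<Sum>r=1..first_passage f v. f r)
    = (\<Sum>r=1..first_passage f u. f r) + (\<Sum>r = first_passage f u + 1..first_passage f v. f r)"
  using sum.ub_add_nat[of 1 "first_passage f u" f "first_passage f v - first_passage f u"]
    first_passage_mono[OF assms] by simp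

lemma sum_between_first_passages_ge:
  assumes le_1: "\<And>r. 1 \<le> r \<Longrightarrow> f r \<le> 1"
    and "0 \<le> u" "u \<le> v" and reached: "\<exists>s. v \<le> (\<Sum>r=1..s. f r)"
  shows "v - (u + 1) * (if u > 0 then 1 else 0)
    \<le> (\<Sum>r = first_passage f u + 1..first_passage f v. f r)"
proof (cases "u > 0")
  case True
  then show ?thesis
    using sum_split_at_first_passage[OF \<open>u \<le> v\<close> reached] first_passage_reached[OF reached]
      first_passage_overshoot[of f u, OF le_1 True] by simp
next
  case False
  then have "u = 0" using \<open>0 \<le> u\<close> by simp
  then show ?thesis
    using sum_split_at_first_passage[OF \<open>u \<le> v\<close> reached] first_passage_reached[OF reached]
    by (simp add: first_passage_0)
qed

lemma sum_between_first_passages_le: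
  assumes f01: "\<And>r. 1 \<le> r \<Longrightarrow> 0 \<le> f r \<and> f r \<le> 1"
    and "u \<le> v" "0 < v" and reached: "\<exists>s. v \<le> (\<Sum>r=1..s. f r)"
  shows "(\<Sum>r = first_passage f u + 1..first_passage f v. f r) \<le> v + 1"
proof -
  have "0 \<le> (\<Sum>r=1..first_passage f u. f r)"
    using f01 by (intro sum_nonneg) simp
  then show ?thesis
    using sum_split_at_first_passage[OF \<open>u \<le> v\<close> reached]
      first_passage_overshoot[of f v] f01 \<open>0 < v\<close> by fastforce
qed

theorem proposition1:
  fixes N :: nat and nu :: "nat \<Rightarrow> nat \<Rightarrow> nat"
  assumes N2: "N \<ge> 2"
    and sumN: "\<And>t. t \<ge> 1 \<Longrightarrow> (\<Sum>i=1..N. nu t i) = N"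
  shows "\<forall>t::nat. \<forall>t' s' :: real. t \<ge> 1 \<and> t' > s' \<and> s' \<ge> 0 \<and> tau_finite N nu t' \<longrightarrow>
     (0 \<le> DN N nu t \<and> DN N nu t \<le> cN N nu t \<and> cN N nu t \<le> 1)
     \<and> (t' - (s' + 1) * (if s' > 0 then 1 else 0)
          \<le> (\<Sum>r = tauN N nu s' + 1 .. tauN N nu t'. cN N nu r)
        \<and> (\<Sum>r = tauN N nu s' + 1 .. tauN N nu t'. cN N nu r) \<le> t' + 1)
     \<and> real (tauN N nu t') \<ge> t'"
proof -
  have c_le_1: "cN N nu r \<le> 1" if "1 \<le> r" for r
    using cN_le_1[where nu=nu and t=r, OF sumN[OF that]] .
  have c01: "0 \<le> cN N nu r \<and> cN N nu r \<le> 1" if "1 \<le> r" for r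
    using cN_nonneg c_le_1[OF that] by blast
  show ?thesis
    unfolding tauN_eq_first_passage tau_finite_def
    using DN_nonneg DN_le_cN[where nu=nu, OF sumN] c_le_1
      sum_between_first_passages_ge[of "cN N nu", OF c_le_1]
      sum_between_first_passages_le[of "cN N nu", OF c01]
      first_passage_ge[of "cN N nu", OF c_le_1]
    by auto
qed

end
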